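(* The map $\Psi\colon A\times J\to\widehat\Pi_C$, $\Psi((y,s),t)=\iota_t(\Psi_t(y,s))$, is a slice-preserving homeomorphism. In particular, each $\Psi_t\colon A\to\hat D_t\setminus\hat I_t$ is a homeomorphism.
   Context: Setup: $I=[-1,1]$, $J=(1,2]$, $f_t(x)=\min(t(x-1)+3,\,t(1-x)-1)$. $S$ is the circle of radius 2 with angular coordinate $y$; $D$ is the disk of radius 2 with coordinates $(y,s)\in S\times[0,1]$ (from a smooth embedding of the mapping cylinder of $y\mapsto\cos y$), $(y,0)=y\in S$, $(y,1)=\cos y\in I\subset D$. $\Upsilon(y,s)=(y,2s)$ for $s\le1/2$, $(y,1)$ for $s\ge1/2$. An unwrapping is a continuously varying (in $t$) family of orientation-preserving near-homeomorphisms $\bar f_t\colon D\to D$ with $\bar f_t$ injective on $I$, $\bar f_t(I)\subset\{s\ge1/2\}$, $\Upsilon\circ\bar f_t|_I=f_t$, the second coordinate of $\bar f_t(y,s)$ equal to $s$ for $s\le1/2$; assume moreover $\bar f_t=\mathrm{id}$ on $S\times[0,3/4]$. $H_t=\Upsilon\circ\bar f_t$, $\hat D_t=\varprojlim(D,H_t)$, $\hat I_t=\varprojlim(I,f_t)\subset\hat D_t$. Let $\Pi=D\times J$, $H(z,t)=(H_t(z),t)$, $\widehat\Pi=\varprojlim(\Pi,H)$ (threads $\langle w_0,w_1,\dots\rangle$ with $H(w_{n+1})=w_n$, product topology), and $\iota_t\colon\hat D_t\to\widehat\Pi$, $\langle z_0,z_1,\dots\rangle\mapsto\langle(z_0,t),(z_1,t),\dots\rangle$;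 let $\widehat\Pi_C=\widehat\Pi\setminus\bigsqcup_{t\in J}\iota_t(\hat I_t)$. Let $A=S\times[0,\infty)$ and define $\Psi_t\colon A\to\hat D_t\setminus\hat I_t$: for $s\in[0,1)$, $\Psi_t(y,s)=\langle(y,s),(y,s/2),(y,s/4),\dots\rangle$; for $s\ge1$, with $k=\lfloor s\rfloor$, $v=(s-k+1)/2$, $\Psi_t(y,s)=\langle z_0,z_1,\dots\rangle$ where $z_{k-j}=H_t^{\,j}(y,v)$ ($1\le j\le k$), $z_k=(y,v)$, $z_{k+j}=(y,v/2^j)$ ($j\ge1$). Slice-preserving means $\Psi(A\times\{t\})\subset\iota_t(\hat D_t)$. *)

theory Defs
  imports "HOL-Complex_Analysis.Complex_Analysis"
begin

definition Dsk :: "complex set" where "Dsk = cball 0 2"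
definition Scirc :: "complex set" where "Scirc = sphere 0 2"
definition Iseg :: "complex set" where "Iseg = complex_of_real ` {-1..1}"
definition Jint :: "real set" where "Jint = {1<..2}"

definition ft :: "real \<Rightarrow> real \<Rightarrow> real" where
  "ft t x = min (t * (x - 1) + 3) (t * (1 - x) - 1)"

text \<open>Coordinates (y,s) on D coming from an embedding of the mapping cylinder of
y |-> cos y.  A point y of S is represented by the point w = 2 e^{iy} of the circle,
so cos y = Re w / 2.  phi (w,s) is the point of D with coordinates (y,s).\<close>

definition mapping_cyl_coords :: "(complex \<times> real \<Rightarrow> complex) \<Rightarrow> bool" where
  "mapping_cyl_coords \<phi> \<longleftrightarrow>
     continuous_on (Scirc \<times> {0..1}) \<phi> \<and> \<phi> ` (Scirc \<times> {0..1}) = Dsk \<and>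
     (\<forall>w\<in>Scirc. \<phi> (w, 0) = w \<and> \<phi> (w, 1) = complex_of_real (Re w / 2)) \<and>
     (\<forall>w\<in>Scirc. \<forall>s\<in>{0..1}. \<forall>w'\<in>Scirc. \<forall>s'\<in>{0..1}.
        \<phi> (w, s) = \<phi> (w', s') \<longrightarrow> (w = w' \<and> s = s') \<or> (s = 1 \<and> s' = 1))"

definition cyl_coords :: "(complex \<times> real \<Rightarrow> complex) \<Rightarrow> complex \<Rightarrow> complex \<times> real" where
  "cyl_coords \<phi> z = (SOME p. p \<in> Scirc \<times> {0..1} \<and> \<phi> p = z)"

definition Upsilon :: "(complex \<times> real \<Rightarrow> complex) \<Rightarrow> complex \<Rightarrow> complex" where
  "Upsilon \<phi> z = (case cyl_coords \<phi> z of (w, s) \<Rightarrow> \<phi> (w, min 1 (2 * s)))"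

text \<open>Orientation-preserving homeomorphisms of D (winding number of the image of the
positively oriented boundary circle is 1), and orientation-preserving
near-homeomorphisms (uniform limits of such).\<close>

definition op_homeo :: "(complex \<Rightarrow> complex) \<Rightarrow> bool" where
  "op_homeo h \<longleftrightarrow> (\<exists>h'. homeomorphism Dsk Dsk h h') \<and>
     winding_number (h \<circ> circlepath 0 2) 0 = 1"

definition op_near_homeo :: "(complex \<Rightarrow> complex) \<Rightarrow> bool" where
  "op_near_homeo g \<longleftrightarrow> g ` Dsk \<subseteq> Dsk \<and>
     (\<forall>\<epsilon>>0. \<exists>h. op_homeo h \<and> (\<forall>z\<in>Dsk. dist (g z) (h z) < \<epsilon>))"

definition unwrapping :: "(complex \<times> real \<Rightarrow> complex) \<Rightarrow> (real \<Rightarrow> complex \<Rightarrow> complex) \<Rightarrow> bool" where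
  "unwrapping \<phi> fbar \<longleftrightarrow>
     continuous_on (Dsk \<times> Jint) (\<lambda>(z, t). fbar t z) \<and>
     (\<forall>t\<in>Jint. op_near_homeo (fbar t) \<and> inj_on (fbar t) Iseg \<and>
        fbar t ` Iseg \<subseteq> \<phi> ` (Scirc \<times> {1/2..1}) \<and>
        (\<forall>x\<in>{-1..1}. Upsilon \<phi> (fbar t (complex_of_real x)) = complex_of_real (ft t x)) \<and>
        (\<forall>w\<in>Scirc. \<forall>s\<in>{0..1/2}. \<exists>w'\<in>Scirc. fbar t (\<phi> (w, s)) = \<phi> (w', s)))"

definition Ht :: "(complex \<times> real \<Rightarrow> complex) \<Rightarrow> (real \<Rightarrow> complex \<Rightarrow> complex) \<Rightarrow> real \<Rightarrow> complex \<Rightarrow> complex" where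
  "Ht \<phi> fbar t = Upsilon \<phi> \<circ> fbar t"

text \<open>Inverse limits, as sets of threads with the product topology on nat => _.\<close>

definition Dhat :: "(complex \<times> real \<Rightarrow> complex) \<Rightarrow> (real \<Rightarrow> complex \<Rightarrow> complex) \<Rightarrow> real \<Rightarrow> (nat \<Rightarrow> complex) set" where
  "Dhat \<phi> fbar t = {z. \<forall>n. z n \<in> Dsk \<and> Ht \<phi> fbar t (z (Suc n)) = z n}"

definition Ihat :: "real \<Rightarrow> (nat \<Rightarrow> complex) set" where
  "Ihat t = {(\<lambda>n. complex_of_real (x n)) | x. \<forall>n. x n \<in> {-1..1} \<and> ft t (x (Suc n)) = x n}"

definition Pihat :: "(complex \<times> real \<Rightarrow> complex) \<Rightarrow> (real \<Rightarrow> complex \<Rightarrow> complex) \<Rightarrow> (nat \<Rightarrow> complex \<times> real) set" where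
  "Pihat \<phi> fbar = {w. \<forall>n. w n \<in> Dsk \<times> Jint \<and>
      (Ht \<phi> fbar (snd (w (Suc n))) (fst (w (Suc n))), snd (w (Suc n))) = w n}"

definition iota :: "real \<Rightarrow> (nat \<Rightarrow> complex) \<Rightarrow> (nat \<Rightarrow> complex \<times> real)" where
  "iota t z = (\<lambda>n. (z n, t))"

definition PihatC :: "(complex \<times> real \<Rightarrow> complex) \<Rightarrow> (real \<Rightarrow> complex \<Rightarrow> complex) \<Rightarrow> (nat \<Rightarrow> complex \<times> real) set" where
  "PihatC \<phi> fbar = Pihat \<phi> fbar - (\<Union>t\<in>Jint. iota t ` Ihat t)"

definition Acyl :: "(complex \<times> real) set" where "Acyl = Scirc \<times> {0..}"

definition Psit :: "(complex \<times> real \<Rightarrow> complex) \<Rightarrow> (real \<Rightarrow> complex \<Rightarrow> complex) \<Rightarrow> real \<Rightarrow> complex \<times> real \<Rightarrow> (nat \<Rightarrow> complex)" where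
  "Psit \<phi> fbar t p = (case p of (w, s) \<Rightarrow>
     if s < 1 then (\<lambda>n. \<phi> (w, s / 2 ^ n))
     else (let k = nat \<lfloor>s\<rfloor>; v = (s - real k + 1) / 2 in
       (\<lambda>n. if n \<le> k then (Ht \<phi> fbar t ^^ (k - n)) (\<phi> (w, v))
            else \<phi> (w, v / 2 ^ (n - k)))))"

definition Psi :: "(complex \<times> real \<Rightarrow> complex) \<Rightarrow> (real \<Rightarrow> complex \<Rightarrow> complex) \<Rightarrow> (complex \<times> real) \<times> real \<Rightarrow> (nat \<Rightarrow> complex \<times> real)" where
  "Psi \<phi> fbar pt = (case pt of (p, t) \<Rightarrow> iota t (Psit \<phi> fbar t p))"

end

theory Submission
  imports Defs
begin

(* Below level 3/4 the unwrapping is the identity, and a near-homeomorphism cannot fold points of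
   level above 3/4 onto level 1/2 (a Brouwer fixed point argument), so H_t doubles the level s,
   truncated at 1.  Hence a thread outside hat I_t has a first coordinate z_k of level c < 1: after
   it the levels halve at constant angle, before it all levels are 1 and the thread is determined by
   z_k through H_t.  Such a thread is Psi_t(y, s) with s = c if k = 0 and s = k + 2c - 1 otherwise.
   Both Psi and this inverse are locally given by continuous expressions in finitely many
   coordinates: the n-th coordinate of Psi_t(y, s) is an iterate of H_t at a point depending
   continuously on (y, s), and the height is s(z_0) + sum_{n=1..N} clamp(2 s(z_n) - 1) for any N
   with s(z_N) < 1/2. *)

lemma continuous_on_open_cover:
  fixes S :: "'a::metric_space set"
  assumes "\<And>x. x \<in> S \<Longrightarrow> \<exists>U. openin (top_of_set S) U \<and> x \<in> U \<and> continuous_on U f"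
  shows "continuous_on S f"
proof (rule continuous_on_eq_continuous_within[THEN iffD2], rule ballI)
  fix x assume "x \<in> S"
  then obtain U where U: "openin (top_of_set S) U" "x \<in> U" "continuous_on U f"
    using assms by blast
  then obtain V where V: "open V" "U = S \<inter> V" by (auto simp: openin_open)
  have "at x within U = at x within S"
    by (rule at_within_nhd[of x V]) (use U V in auto)
  then show "continuous (at x within S) f"
    using U continuous_on_eq_continuous_within by fastforce
qed

lemma continuous_on_compact_quotient:
  fixes q :: "'a::t2_space \<Rightarrow> 'b::t2_space" and f :: "'b \<Rightarrow> 'c::topological_space"
  assumes "compact K" "continuous_on K q" "q ` K = T" "continuous_on K (f \<circ> q)"
  shows "continuous_on T f"
  unfolding continuous_on_closed_invariant
proof (intro allI impI)
  fix B :: "'c set" assume "closed B"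
  then obtain A where A: "closed A" "A \<inter> K = (f \<circ> q) -` B \<inter> K"
    using assms(4) unfolding continuous_on_closed_invariant by blast
  have "compact (q ` (A \<inter> K))"
    using A(1) assms(1,2) by (meson closed_Int_compact compact_continuous_image continuous_on_subset inf_le2)
  moreover have "q ` (A \<inter> K) \<inter> T = f -` B \<inter> T" using A(2) assms(3) by auto
  ultimately show "\<exists>A. closed A \<and> A \<inter> T = f -` B \<inter> T" using compact_imp_closed by blast
qed

lemma continuous_on_funpow:
  assumes "continuous_on S f" "f ` S \<subseteq> S"
  shows "continuous_on S (f ^^ n)"
proof (induction n)
  case (Suc n)
  have "(f ^^ n) ` S \<subseteq> S" by (induction n) (use assms(2) in auto)
  then show ?case using continuous_on_compose2[OF assms(1) Suc.IH] by simp
qed simp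

text \<open>A uniform limit of injective maps that is the identity near \<open>q\<close> has no other preimage
  of \<open>q\<close>: an approximating map \<open>h\<close> is almost the identity near \<open>q\<close>, so by Brouwer's theorem
  it attains near \<open>q\<close> the value it takes at any preimage of \<open>q\<close>.\<close>

lemma near_injective_fixed_ball_preimage:
  fixes g :: "'a::euclidean_space \<Rightarrow> 'a"
  assumes approx: "\<And>\<epsilon>. \<epsilon> > 0 \<Longrightarrow> \<exists>h. continuous_on S h \<and> inj_on h S \<and> (\<forall>z\<in>S. dist (g z) (h z) < \<epsilon>)"
    and r: "r > 0" "cball q r \<subseteq> S" "\<forall>x\<in>cball q r. g x = x"
    and p: "p \<in> S" "g p = q"
  shows "p = q"
proof -
  obtain h where h: "continuous_on S h" "inj_on h S" "\<forall>z\<in>S. dist (g z) (h z) < r/2"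
    using approx[of "r/2"] r(1) by auto
  define F where "F x = x - h x + h p" for x
  have "continuous_on (cball q r) F"
    unfolding F_def by (intro continuous_intros continuous_on_subset[OF h(1) r(2)])
  moreover have "F \<in> cball q r \<rightarrow> cball q r"
  proof
    fix x assume x: "x \<in> cball q r"
    have "dist q (F x) = norm ((h x - x) + (q - h p))" by (simp add: F_def dist_norm algebra_simps)
    also have "\<dots> \<le> dist (h x) x + dist q (h p)" by (metis dist_norm norm_triangle_ineq)
    also have "\<dots> < r"
    proof -
      have "dist (h x) x < r/2" using h(3) x r(2,3) by (metis dist_commute subsetD)
      moreover have "dist q (h p) < r/2" using h(3) p by blast
      ultimately show ?thesis by linarith
    qed
    finally show "F x \<in> cball q r" by simp
  qed
  ultimately obtain x where x: "x \<in> cball q r" "F x = x" using brouwer_ball[OF r(1)] by blast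
  then have "h x = h p" by (simp add: F_def algebra_simps)
  then have "x = p" using h(2) p(1) r(2) x(1) by (meson inj_onD subsetD)
  then show ?thesis using x(1) r(3) p(2) by auto
qed

lemma homeomorphism_slice:
  assumes hom: "homeomorphism (A \<times> J) P F G" and t: "t \<in> J"
    and f: "continuous_on A f" and e: "continuous_on X e" "inj e"
    and fe: "\<And>a. a \<in> A \<Longrightarrow> e (f a) = F (a, t)"
    and slice: "e ` X = F ` (A \<times> {t})"
  shows "homeomorphism A X f (\<lambda>x. fst (G (e x)))"
proof
  have GF: "G (F (a, t)) = (a, t)" if "a \<in> A" for a
    using hom t that by (simp add: homeomorphism_def)
  have eX: "e x \<in> F ` (A \<times> {t})" if "x \<in> X" for x using slice that by blast
  show "continuous_on A f" by fact
  have "e ` X \<subseteq> P" using slice hom t by (auto simp: homeomorphism_def)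
  then show "continuous_on X (\<lambda>x. fst (G (e x)))"
    using hom by (intro continuous_intros continuous_on_compose2[OF _ e(1)]) (auto simp: homeomorphism_def)
  show "f ` A \<subseteq> X"
  proof
    fix b assume "b \<in> f ` A"
    then obtain a where "a \<in> A" "b = f a" by blast
    then have "e b \<in> e ` X" using fe slice by auto
    then show "b \<in> X" using e(2) by (auto dest: injD)
  qed
  show "(\<lambda>x. fst (G (e x))) ` X \<subseteq> A" using eX GF by force
  show "fst (G (e (f a))) = a" if "a \<in> A" for a using fe GF that by simp
  show "f (fst (G (e x))) = x" if x: "x \<in> X" for x
  proof -
    obtain a where "a \<in> A" "e x = F (a, t)" using eX[OF x] by blast
    then show ?thesis using fe GF e(2) by (metis fst_conv injD)
  qed
qed

lemma divide_power_two_le: "0 \<le> (a::real) \<Longrightarrow> a / 2^m \<le> a"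
  by (simp add: divide_le_eq mult_le_cancel_left1)

lemma exists_nat_gt: "\<exists>M::nat. x < real M \<and> n < M"
proof -
  obtain m :: nat where "x < real m" using reals_Archimedean2 by blast
  then show ?thesis by (intro exI[of _ "max m (Suc n)"]) auto
qed

lemma op_near_homeo_approx:
  assumes "op_near_homeo g" "\<epsilon> > 0"
  shows "\<exists>h. continuous_on Dsk h \<and> inj_on h Dsk \<and> (\<forall>z\<in>Dsk. dist (g z) (h z) < \<epsilon>)"
proof -
  obtain h where h: "op_homeo h" "\<forall>z\<in>Dsk. dist (g z) (h z) < \<epsilon>"
    using assms unfolding op_near_homeo_def by blast
  then obtain h' where "homeomorphism Dsk Dsk h h'" unfolding op_homeo_def by blast
  then have "continuous_on Dsk h" "inj_on h Dsk"
    by (auto simp: homeomorphism_def intro: inj_on_inverseI)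
  then show ?thesis using h(2) by blast
qed

lemma continuous_on_fst_coordinate:
  "continuous_on S (\<lambda>y :: nat \<Rightarrow> 'a::topological_space \<times> 'b::topological_space. fst (y n))"
  by (intro continuous_intros continuous_on_subset[OF continuous_on_product_coordinates]) simp

lemma iota_eq_iff: "iota t z = iota t' z' \<longleftrightarrow> t = t' \<and> z = z'"
  by (auto simp: iota_def fun_eq_iff)

lemma Pihat_iff: "y \<in> Pihat \<phi> fbar \<longleftrightarrow> (\<exists>t\<in>Jint. \<exists>z\<in>Dhat \<phi> fbar t. y = iota t z)"
proof
  assume y: "y \<in> Pihat \<phi> fbar"
  then have yn: "y n \<in> Dsk \<times> Jint \<and>
      (Ht \<phi> fbar (snd (y (Suc n))) (fst (y (Suc n))), snd (y (Suc n))) = y n" for n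
    by (simp add: Pihat_def)
  then have step: "y n \<in> Dsk \<times> Jint" "snd (y (Suc n)) = snd (y n)"
    "Ht \<phi> fbar (snd (y (Suc n))) (fst (y (Suc n))) = fst (y n)" for n
    by (metis fst_conv snd_conv)+
  have sn: "snd (y n) = snd (y 0)" for n by (induction n) (simp_all add: step(2))
  have "Ht \<phi> fbar (snd (y 0)) (fst (y (Suc n))) = fst (y n)" for n
    using step(3)[of n] sn[of "Suc n"] by simp
  then have "(\<lambda>n. fst (y n)) \<in> Dhat \<phi> fbar (snd (y 0))"
    using step(1) by (simp add: Dhat_def mem_Times_iff)
  moreover have "y = iota (snd (y 0)) (\<lambda>n. fst (y n))"
    by (auto simp: iota_def fun_eq_iff prod_eq_iff intro: sn)
  ultimately show "\<exists>t\<in>Jint. \<exists>z\<in>Dhat \<phi> fbar t. y = iota t z" using step(1)[of 0] by auto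
qed (auto simp: Pihat_def iota_def Dhat_def)

lemma PihatC_iff: "y \<in> PihatC \<phi> fbar \<longleftrightarrow> (\<exists>t\<in>Jint. \<exists>z\<in>Dhat \<phi> fbar t - Ihat t. y = iota t z)"
  unfolding PihatC_def Diff_iff Pihat_iff by (auto simp: iota_eq_iff)

subsection \<open>Heights on the annulus\<close>

text \<open>A height \<open>s \<ge> 0\<close> on the annulus is encoded by the index \<open>k\<close> of the first coordinate of level
  below \<open>1\<close> of the thread \<open>\<Psi>\<^sub>t(y, s)\<close> and by that level \<open>c\<close>; \<open>height_of\<close> decodes it.\<close>

definition height_index :: "real \<Rightarrow> nat" where
  "height_index s = (if s < 1 then 0 else nat \<lfloor>s\<rfloor>)"

definition height_level :: "real \<Rightarrow> real" where
  "height_level s = (if s < 1 then s else (s - real (nat \<lfloor>s\<rfloor>) + 1) / 2)"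

definition height_of :: "nat \<Rightarrow> real \<Rightarrow> real" where
  "height_of k c = (if k = 0 then c else real k + 2 * c - 1)"

definition clamp01 :: "real \<Rightarrow> real" where "clamp01 u = max 0 (min 1 u)"

lemma clamp01_sum_staircase:
  fixes a :: "nat \<Rightarrow> real"
  assumes "\<forall>n<k. a n = 1" "a k = c" "0 \<le> c" "c < 1" "0 < k \<Longrightarrow> 1/2 \<le> c" "a (Suc k) < 1/2"
  shows "a 0 + (\<Sum>n=1..Suc k. clamp01 (2 * a n - 1)) = height_of k c"
proof -
  have "(\<Sum>n=1..Suc k. clamp01 (2 * a n - 1)) = (\<Sum>n=1..k. clamp01 (2 * a n - 1))"
    using assms(6) by (simp add: clamp01_def)
  moreover have "(\<Sum>n=1..k. clamp01 (2 * a n - 1)) = real k - 1 + clamp01 (2 * c - 1)" if "0 < k"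
  proof -
    obtain m where m: "k = Suc m" using \<open>0 < k\<close> gr0_implies_Suc by blast
    have "(\<Sum>n=1..m. clamp01 (2 * a n - 1)) = (\<Sum>n=1..m. 1)"
      by (rule sum.cong) (use assms(1) m in \<open>auto simp: clamp01_def\<close>)
    then show ?thesis using m assms(2) by simp
  qed
  ultimately show ?thesis using assms(1-5) by (cases "k = 0") (auto simp: clamp01_def height_of_def)
qed

definition height_unroll :: "real \<Rightarrow> real" where
  "height_unroll s = 2 ^ height_index s * height_level s"

lemma height_index_level:
  assumes "0 \<le> s"
  shows "0 \<le> height_level s" "height_level s < 1" "0 < height_index s \<Longrightarrow> 1/2 \<le> height_level s"
    "real (height_index s) \<le> s" "height_of (height_index s) (height_level s) = s"
  using assms floor_correct[of s] by (auto simp: height_index_def height_level_def height_of_def field_simps)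
    (use of_int_floor_le[of s] in linarith)

lemma height_of_index_level:
  assumes "0 \<le> c" "c < 1" "0 < k \<Longrightarrow> 1/2 \<le> c"
  shows "height_index (height_of k c) = k" "height_level (height_of k c) = c"
proof -
  have "\<lfloor>height_of k c\<rfloor> = int k" if "0 < k"
    by (rule floor_unique) (use assms that in \<open>auto simp: height_of_def\<close>)
  then show "height_index (height_of k c) = k" "height_level (height_of k c) = c"
    using assms by (auto simp: height_index_def height_level_def height_of_def)
qed

lemma height_unroll_div:
  assumes "0 \<le> s" "s < real M"
  shows "height_index s < M" "height_unroll s / 2^M = height_level s / 2^(M - height_index s)"
proof -
  show "height_index s < M"
    using height_index_level(4)[OF assms(1)] assms(2) by linarith
  then show "height_unroll s / 2^M = height_level s / 2^(M - height_index s)"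
    by (simp add: height_unroll_def power_diff field_simps)
qed

lemma height_unroll_div_bounds:
  assumes "0 \<le> s" "s < real M"
  shows "0 \<le> height_unroll s / 2^M" "height_unroll s / 2^M \<le> 1"
proof -
  have "height_level s \<le> 2^(M - height_index s)"
    using height_index_level(2)[OF assms(1)] one_le_power[of "2::real" "M - height_index s"] by linarith
  then show "0 \<le> height_unroll s / 2^M" "height_unroll s / 2^M \<le> 1"
    using height_unroll_div(2)[OF assms] height_index_level(1)[OF assms(1)] by simp_all
qed

lemma height_unroll_on_unit_interval:
  assumes "real M \<le> s" "s \<le> real M + 1"
  shows "height_unroll s = (if M = 0 then s else 2^M * ((s - real M + 1) / 2))"
proof (cases "s = real M + 1")
  case True
  then have "nat \<lfloor>s\<rfloor> = Suc M" by simp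
  then show ?thesis using True by (simp add: height_unroll_def height_index_def height_level_def)
next
  case False
  then have "s < real M + 1" using assms by simp
  then have "M \<noteq> 0 \<Longrightarrow> nat \<lfloor>s\<rfloor> = M" using assms by linarith
  then show ?thesis using assms \<open>s < real M + 1\<close>
    by (auto simp: height_unroll_def height_index_def height_level_def)
qed

lemma height_unroll_continuous: "continuous_on {0..} height_unroll"
proof -
  have piece: "continuous_on {real M..real M + 1} height_unroll" for M
  proof -
    have "continuous_on {real M..real M + 1} (\<lambda>s. if M = 0 then s else 2^M * ((s - real M + 1) / 2))"
      by (cases "M = 0") (auto intro!: continuous_intros)
    then show ?thesis
      by (rule continuous_on_eq) (simp add: height_unroll_on_unit_interval[of M])
  qed
  have bounded: "continuous_on {0..real M} height_unroll" for M
  proof (induction M)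
    case (Suc M)
    have "{0..real (Suc M)} = {0..real M} \<union> {real M..real M + 1}" by auto
    then show ?case using continuous_on_closed_Un[OF _ _ Suc.IH piece] by simp
  qed simp
  show ?thesis
  proof (rule continuous_on_open_cover)
    fix x :: real assume x: "x \<in> {0..}"
    obtain M :: nat where "x < real M" using reals_Archimedean2 by blast
    then show "\<exists>U. openin (top_of_set {0..}) U \<and> x \<in> U \<and> continuous_on U height_unroll"
      using x by (intro exI[of _ "{0..} \<inter> {..<real M}"] conjI openin_open_Int
          continuous_on_subset[OF bounded[of M]]) auto
  qed
qed

subsection \<open>Cylinder coordinates and the level-doubling map\<close>

locale unwrapping_context =
  fixes \<phi> :: "complex \<times> real \<Rightarrow> complex" and fbar :: "real \<Rightarrow> complex \<Rightarrow> complex"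
  assumes cyl: "mapping_cyl_coords \<phi>"
    and unwrap: "unwrapping \<phi> fbar"
    and fbar_id_low: "\<forall>t\<in>Jint. \<forall>w\<in>Scirc. \<forall>s\<in>{0..3/4}. fbar t (\<phi> (w, s)) = \<phi> (w, s)"
begin

text \<open>The coordinates \<open>(y, s)\<close> of a point of the disk; \<open>y\<close> is represented by a point of \<open>Scirc\<close>
  and is meaningful only for \<open>s < 1\<close>.\<close>

definition ycoord :: "complex \<Rightarrow> complex" where "ycoord z = fst (cyl_coords \<phi> z)"
definition scoord :: "complex \<Rightarrow> real" where "scoord z = snd (cyl_coords \<phi> z)"

abbreviation H :: "real \<Rightarrow> complex \<Rightarrow> complex" where "H \<equiv> Ht \<phi> fbar"

lemma phi_continuous: "continuous_on (Scirc \<times> {0..1}) \<phi>"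
  and phi_image: "\<phi> ` (Scirc \<times> {0..1}) = Dsk"
  and phi_base: "w \<in> Scirc \<Longrightarrow> \<phi> (w, 0) = w"
  and phi_top: "w \<in> Scirc \<Longrightarrow> \<phi> (w, 1) = complex_of_real (Re w / 2)"
  using cyl unfolding mapping_cyl_coords_def by auto

lemma phi_inj:
  assumes "w \<in> Scirc" "0 \<le> s" "s \<le> 1" "w' \<in> Scirc" "0 \<le> s'" "s' \<le> 1" "\<phi> (w, s) = \<phi> (w', s')"
  shows "(w = w' \<and> s = s') \<or> (s = 1 \<and> s' = 1)"
  using cyl assms unfolding mapping_cyl_coords_def by auto

lemma phi_in_Dsk: "w \<in> Scirc \<Longrightarrow> 0 \<le> s \<Longrightarrow> s \<le> 1 \<Longrightarrow> \<phi> (w, s) \<in> Dsk"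
  using phi_image by force

lemma coords_of_Dsk:
  assumes "z \<in> Dsk"
  shows "ycoord z \<in> Scirc" "0 \<le> scoord z" "scoord z \<le> 1" "\<phi> (ycoord z, scoord z) = z"
proof -
  have "\<exists>p. p \<in> Scirc \<times> {0..1} \<and> \<phi> p = z" using assms phi_image by force
  then have "cyl_coords \<phi> z \<in> Scirc \<times> {0..1} \<and> \<phi> (cyl_coords \<phi> z) = z"
    unfolding cyl_coords_def by (rule someI_ex)
  then show "ycoord z \<in> Scirc" "0 \<le> scoord z" "scoord z \<le> 1" "\<phi> (ycoord z, scoord z) = z"
    by (auto simp: ycoord_def scoord_def)
qed

lemma coords_phi:
  assumes "w \<in> Scirc" "0 \<le> s" "s \<le> 1"
  shows scoord_phi: "scoord (\<phi> (w, s)) = s" and ycoord_phi: "s < 1 \<Longrightarrow> ycoord (\<phi> (w, s)) = w"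
proof -
  note c = coords_of_Dsk[OF phi_in_Dsk[OF assms]]
  have "(ycoord (\<phi> (w, s)) = w \<and> scoord (\<phi> (w, s)) = s) \<or> (scoord (\<phi> (w, s)) = 1 \<and> s = 1)"
    using phi_inj[OF c(1-3) assms c(4)] by auto
  then show "scoord (\<phi> (w, s)) = s" "s < 1 \<Longrightarrow> ycoord (\<phi> (w, s)) = w" by auto
qed

lemma Upsilon_eq: "Upsilon \<phi> z = \<phi> (ycoord z, min 1 (2 * scoord z))"
  by (simp add: Upsilon_def ycoord_def scoord_def case_prod_beta)

lemma Upsilon_phi:
  assumes "w \<in> Scirc" "0 \<le> s" "s \<le> 1"
  shows "Upsilon \<phi> (\<phi> (w, s)) = \<phi> (w, min 1 (2 * s))"
proof (cases "s < 1")
  case True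
  then show ?thesis using assms by (simp add: Upsilon_eq scoord_phi ycoord_phi)
next
  case False
  then have "s = 1" using assms by simp
  then show ?thesis
    using coords_of_Dsk(4)[OF phi_in_Dsk[OF assms]] assms by (simp add: Upsilon_eq scoord_phi)
qed

lemma Upsilon_in_Dsk: "z \<in> Dsk \<Longrightarrow> Upsilon \<phi> z \<in> Dsk"
  and scoord_Upsilon: "z \<in> Dsk \<Longrightarrow> scoord (Upsilon \<phi> z) = min 1 (2 * scoord z)"
  using coords_of_Dsk[of z] by (simp_all add: Upsilon_eq phi_in_Dsk scoord_phi)

lemma scoord_continuous: "continuous_on Dsk scoord"
proof (rule continuous_on_compact_quotient[OF _ phi_continuous phi_image])
  show "compact (Scirc \<times> {0..1::real})" by (simp add: Scirc_def compact_Times)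
  show "continuous_on (Scirc \<times> {0..1}) (scoord \<circ> \<phi>)"
    by (rule continuous_on_eq[OF continuous_on_snd[OF continuous_on_id]]) (auto simp: scoord_phi)
qed

lemma Upsilon_continuous: "continuous_on Dsk (Upsilon \<phi>)"
proof (rule continuous_on_compact_quotient[OF _ phi_continuous phi_image])
  show "compact (Scirc \<times> {0..1::real})" by (simp add: Scirc_def compact_Times)
  have "continuous_on (Scirc \<times> {0..1}) (\<lambda>p. \<phi> (fst p, min 1 (2 * snd p)))"
    by (rule continuous_on_compose2[OF phi_continuous]) (auto intro!: continuous_intros)
  then show "continuous_on (Scirc \<times> {0..1}) (Upsilon \<phi> \<circ> \<phi>)"
    by (rule continuous_on_eq) (auto simp: Upsilon_phi)
qed

lemma ycoord_continuous: "continuous_on {z \<in> Dsk. scoord z \<le> 1/2} ycoord"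
proof (rule continuous_on_compact_quotient[of "Scirc \<times> {0..1/2}" \<phi>])
  show "compact (Scirc \<times> {0..1/2::real})" by (simp add: Scirc_def compact_Times)
  show "continuous_on (Scirc \<times> {0..1/2}) \<phi>" by (rule continuous_on_subset[OF phi_continuous]) auto
  show "\<phi> ` (Scirc \<times> {0..1/2}) = {z \<in> Dsk. scoord z \<le> 1/2}"
  proof
    show "\<phi> ` (Scirc \<times> {0..1/2}) \<subseteq> {z \<in> Dsk. scoord z \<le> 1/2}"
      using phi_in_Dsk scoord_phi by auto
    show "{z \<in> Dsk. scoord z \<le> 1/2} \<subseteq> \<phi> ` (Scirc \<times> {0..1/2})"
      using coords_of_Dsk by (force intro!: image_eqI)
  qed
  show "continuous_on (Scirc \<times> {0..1/2}) (ycoord \<circ> \<phi>)"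
    by (rule continuous_on_eq[OF continuous_on_fst[OF continuous_on_id]]) (auto simp: ycoord_phi)
qed

lemma norm_lt_2_if_scoord_pos:
  assumes "z \<in> Dsk" "scoord z > 0"
  shows "norm z < 2"
proof (rule ccontr)
  assume "\<not> norm z < 2"
  then have "z \<in> Scirc" using assms(1) by (simp add: Dsk_def Scirc_def)
  then have "scoord z = 0" using scoord_phi[of z 0] phi_base by simp
  then show False using assms(2) by simp
qed

lemma fbar_continuous_joint: "continuous_on (Dsk \<times> Jint) (\<lambda>p. fbar (snd p) (fst p))"
  using unwrap unfolding unwrapping_def by (simp add: case_prod_beta')

lemma fbar_near_homeo: "t \<in> Jint \<Longrightarrow> op_near_homeo (fbar t)"
  and fbar_on_Iseg: "t \<in> Jint \<Longrightarrow> x \<in> {-1..1} \<Longrightarrow>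
    Upsilon \<phi> (fbar t (complex_of_real x)) = complex_of_real (ft t x)"
  using unwrap unfolding unwrapping_def by blast+

lemma fbar_in_Dsk: "t \<in> Jint \<Longrightarrow> z \<in> Dsk \<Longrightarrow> fbar t z \<in> Dsk"
  using fbar_near_homeo unfolding op_near_homeo_def by blast

lemma fbar_low: "t \<in> Jint \<Longrightarrow> z \<in> Dsk \<Longrightarrow> scoord z \<le> 3/4 \<Longrightarrow> fbar t z = z"
  using fbar_id_low coords_of_Dsk[of z] by force

lemma fbar_continuous:
  assumes "t \<in> Jint"
  shows "continuous_on Dsk (fbar t)"
proof -
  have "continuous_on Dsk (\<lambda>z. (z, t))" by (intro continuous_intros)
  moreover have "(\<lambda>z. (z, t)) ` Dsk \<subseteq> Dsk \<times> Jint" using assms by auto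
  ultimately have "continuous_on Dsk (\<lambda>z. fbar (snd (z, t)) (fst (z, t)))"
    by (rule continuous_on_compose2[OF fbar_continuous_joint])
  then show ?thesis by simp
qed

text \<open>The unwrapping is the identity on a neighbourhood of every point of level \<open>1/2\<close>,
  so such a point has no other preimage.\<close>

lemma fbar_scoord_ne_half:
  assumes t: "t \<in> Jint" and p: "p \<in> Dsk" "scoord p > 3/4"
  shows "scoord (fbar t p) \<noteq> 1/2"
proof
  define q where "q = fbar t p"
  assume "scoord (fbar t p) = 1/2"
  then have q: "q \<in> Dsk" "scoord q = 1/2" using fbar_in_Dsk[OF t p(1)] by (auto simp: q_def)
  have "norm q < 2" using norm_lt_2_if_scoord_pos q by simp
  have "(1/4::real) > 0" by simp
  then obtain \<delta> where \<delta>: "\<delta> > 0" "\<forall>x\<in>Dsk. dist x q < \<delta> \<longrightarrow> dist (scoord x) (scoord q) < 1/4"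
    using scoord_continuous q(1) unfolding continuous_on_iff by blast
  define r where "r = min (\<delta>/2) ((2 - norm q)/2)"
  have r: "r > 0" using \<delta>(1) \<open>norm q < 2\<close> by (simp add: r_def)
  have "r \<le> (2 - norm q)/2" unfolding r_def by (rule min.cobounded2)
  then have ball: "cball q r \<subseteq> Dsk"
    unfolding Dsk_def cball_subset_cball_iff using \<open>norm q < 2\<close> by auto
  have fixed: "\<forall>x\<in>cball q r. fbar t x = x"
  proof
    fix x assume "x \<in> cball q r"
    then have "dist x q < \<delta>" using \<delta>(1) by (simp add: r_def dist_commute)
    then have "dist (scoord x) (scoord q) < 1/4" using \<delta>(2) ball \<open>x \<in> cball q r\<close> by blast
    then have "scoord x - scoord q < 1/4" unfolding dist_real_def by (metis abs_less_iff)
    then have "scoord x < 3/4" using q(2) by simp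
    moreover have "x \<in> Dsk" using ball \<open>x \<in> cball q r\<close> by blast
    ultimately show "fbar t x = x" using fbar_low[OF t] by simp
  qed
  have "fbar t p = q" by (simp add: q_def)
  then have "p = q"
    using near_injective_fixed_ball_preimage[OF op_near_homeo_approx[OF fbar_near_homeo[OF t]] r ball fixed p(1)]
    by blast
  then show False using p(2) q(2) by simp
qed

lemma fbar_scoord_gt_half:
  assumes t: "t \<in> Jint" and z: "z \<in> Dsk" "scoord z > 3/4"
  shows "scoord (fbar t z) > 1/2"
proof (rule ccontr)
  assume "\<not> scoord (fbar t z) > 1/2"
  define f where "f s = scoord (fbar t (\<phi> (ycoord z, s)))" for s
  note c = coords_of_Dsk[OF z(1)]
  have seg: "(\<lambda>s. \<phi> (ycoord z, s)) ` {3/4..scoord z} \<subseteq> Dsk" using c phi_in_Dsk by auto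
  have "continuous_on {3/4..scoord z} (\<lambda>s. \<phi> (ycoord z, s))"
    by (rule continuous_on_compose2[OF phi_continuous]) (use c in \<open>auto intro!: continuous_intros\<close>)
  then have "continuous_on {3/4..scoord z} (\<lambda>s. fbar t (\<phi> (ycoord z, s)))"
    using continuous_on_compose2[OF fbar_continuous[OF t] _ seg] by simp
  then have "continuous_on {3/4..scoord z} f"
    using continuous_on_compose2[OF scoord_continuous] seg fbar_in_Dsk[OF t] unfolding f_def by blast
  moreover have "f (3/4) = 3/4"
    using fbar_low[OF t phi_in_Dsk] c(1) by (simp add: f_def scoord_phi phi_in_Dsk)
  moreover have "f (scoord z) \<le> 1/2" using \<open>\<not> scoord (fbar t z) > 1/2\<close> c by (simp add: f_def)
  ultimately obtain s where s: "3/4 \<le> s" "s \<le> scoord z" "f s = 1/2"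
    using IVT2'[of f "scoord z" "1/2" "3/4"] z(2) by auto
  have "s \<noteq> 3/4"
  proof
    assume "s = 3/4"
    then have "f s = f (3/4)" by (rule arg_cong)
    then show False using s(3) \<open>f (3/4) = 3/4\<close> by simp
  qed
  have "\<phi> (ycoord z, s) \<in> Dsk" "scoord (\<phi> (ycoord z, s)) = s"
    using s c phi_in_Dsk scoord_phi by auto
  then show False
    using fbar_scoord_ne_half[OF t] \<open>s \<noteq> 3/4\<close> s(1,3) by (force simp: f_def)
qed

lemma H_in_Dsk: "t \<in> Jint \<Longrightarrow> z \<in> Dsk \<Longrightarrow> H t z \<in> Dsk"
  by (simp add: Ht_def Upsilon_in_Dsk fbar_in_Dsk)

lemma scoord_H:
  assumes "t \<in> Jint" "z \<in> Dsk"
  shows "scoord (H t z) = min 1 (2 * scoord z)"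
proof (cases "scoord z \<le> 3/4")
  case True
  then show ?thesis using assms by (simp add: Ht_def fbar_low scoord_Upsilon)
next
  case False
  then show ?thesis
    using fbar_scoord_gt_half[OF assms] assms by (simp add: Ht_def scoord_Upsilon fbar_in_Dsk)
qed

lemma H_low: "t \<in> Jint \<Longrightarrow> z \<in> Dsk \<Longrightarrow> scoord z \<le> 1/2 \<Longrightarrow> H t z = \<phi> (ycoord z, 2 * scoord z)"
  by (simp add: Ht_def fbar_low Upsilon_eq)

lemma scoord_funpow_H:
  assumes "t \<in> Jint" "z \<in> Dsk"
  shows "(H t ^^ j) z \<in> Dsk \<and> scoord ((H t ^^ j) z) = min 1 (2^j * scoord z)"
proof (induction j)
  case (Suc j)
  have "min 1 (2 * min 1 (2^j * scoord z)) = min 1 (2^Suc j * scoord z)"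
    using coords_of_Dsk(2)[OF assms(2)] by (simp add: min_def)
  then show ?case using Suc H_in_Dsk[OF assms(1)] scoord_H[OF assms(1)] by simp
qed (use coords_of_Dsk[OF assms(2)] assms in simp)

lemma H_funpow_phi_halved:
  assumes t: "t \<in> Jint" and w: "w \<in> Scirc" and u: "0 \<le> u" "u \<le> 1"
  shows "j \<le> m \<Longrightarrow> (H t ^^ j) (\<phi> (w, u / 2^m)) = \<phi> (w, u / 2^(m - j))"
proof (induction j)
  case (Suc j)
  define v where "v = u / 2^(m - j)"
  have "(2::real) ^ 1 \<le> 2^(m - j)" using Suc.prems by (intro power_increasing) auto
  then have v: "0 \<le> v" "v \<le> 1/2" using u by (simp_all add: v_def field_simps)
  then have "H t (\<phi> (w, v)) = \<phi> (w, 2 * v)"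
    using H_low[OF t phi_in_Dsk[OF w]] scoord_phi[OF w] ycoord_phi[OF w] by simp
  moreover have "(H t ^^ j) (\<phi> (w, u / 2^m)) = \<phi> (w, v)" using Suc by (simp add: v_def)
  moreover have "m - j = Suc (m - Suc j)" using Suc.prems by simp
  then have "2 * v = u / 2^(m - Suc j)" by (simp add: v_def)
  ultimately show ?case by simp
qed simp

lemma scoord_real:
  assumes "x \<in> {-1..1}"
  shows "complex_of_real x \<in> Dsk" "scoord (complex_of_real x) = 1"
proof -
  define w where "w = Complex (2 * x) (2 * sqrt (1 - x^2))"
  have "x^2 \<le> 1" using assms abs_square_le_1 by fastforce
  then have "norm w = 2" by (simp add: w_def complex_norm power_mult_distrib real_sqrt_eq_iff)
  then have w: "w \<in> Scirc" by (simp add: Scirc_def)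
  then have "\<phi> (w, 1) = complex_of_real x" by (simp add: phi_top w_def)
  moreover have "\<phi> (w, 1) \<in> Dsk" "scoord (\<phi> (w, 1)) = 1" using scoord_phi[OF w] phi_in_Dsk[OF w] by simp_all
  ultimately show "complex_of_real x \<in> Dsk" "scoord (complex_of_real x) = 1" by simp_all
qed

lemma real_if_scoord_1:
  assumes "z \<in> Dsk" "scoord z = 1"
  shows "z = complex_of_real (Re (ycoord z) / 2)" "Re (ycoord z) / 2 \<in> {-1..1}"
proof -
  have "\<bar>Re (ycoord z)\<bar> \<le> 2" using abs_Re_le_cmod[of "ycoord z"] coords_of_Dsk(1)[OF assms(1)] by (simp add: Scirc_def)
  then show "Re (ycoord z) / 2 \<in> {-1..1}" by (auto simp: abs_le_iff)
  show "z = complex_of_real (Re (ycoord z) / 2)"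
    using phi_top[OF coords_of_Dsk(1)[OF assms(1)]] coords_of_Dsk(4)[OF assms(1)] assms(2) by metis
qed

subsection \<open>Threads of the inverse limit\<close>

lemma Psit_eq:
  "Psit \<phi> fbar t (w, s) n =
    (if n \<le> height_index s then (H t ^^ (height_index s - n)) (\<phi> (w, height_level s))
     else \<phi> (w, height_level s / 2 ^ (n - height_index s)))"
  by (simp add: Psit_def height_index_def height_level_def Let_def)

lemma Psit_eq_funpow:
  assumes t: "t \<in> Jint" and w: "w \<in> Scirc" and s: "0 \<le> s" "s < real M" and n: "n \<le> M"
  shows "Psit \<phi> fbar t (w, s) n = (H t ^^ (M - n)) (\<phi> (w, height_unroll s / 2^M))"
proof -
  define k where "k = height_index s"
  define c where "c = height_level s"
  have c: "0 \<le> c" "c \<le> 1" using height_index_level(1,2)[OF s(1)] by (simp_all add: c_def)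
  have "k < M" and unroll: "height_unroll s / 2^M = c / 2^(M - k)"
    using height_unroll_div[OF s] by (simp_all add: k_def c_def)
  have iter: "(H t ^^ j) (\<phi> (w, c / 2^(M - k))) = \<phi> (w, c / 2^(M - k - j))" if "j \<le> M - k" for j
    using H_funpow_phi_halved[OF t w c that] .
  show ?thesis
  proof (cases "n \<le> k")
    case True
    then have "M - n = (k - n) + (M - k)" using \<open>k < M\<close> by simp
    then have "(H t ^^ (M - n)) (\<phi> (w, c / 2^(M - k))) = (H t ^^ (k - n)) (\<phi> (w, c))"
      using iter[of "M - k"] by (simp only: funpow_add o_apply) simp
    then show ?thesis using True unroll Psit_eq[of t w s n] by (simp add: k_def c_def)
  next
    case False
    then have "M - k - (M - n) = n - k" using n by simp
    then show ?thesis using False unroll iter[of "M - n"] n Psit_eq[of t w s n]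
      by (simp add: k_def c_def)
  qed
qed

lemma Psit_in_Dhat:
  assumes t: "t \<in> Jint" and w: "w \<in> Scirc" and s: "0 \<le> s"
  shows "Psit \<phi> fbar t (w, s) \<in> Dhat \<phi> fbar t"
  unfolding Dhat_def
proof (intro CollectI allI conjI)
  fix n
  obtain M where M: "s < real M" "Suc n < M" using exists_nat_gt by blast
  define base where "base = \<phi> (w, height_unroll s / 2^M)"
  have "base \<in> Dsk" using phi_in_Dsk[OF w height_unroll_div_bounds[OF s M(1)]] by (simp add: base_def)
  have eq: "Psit \<phi> fbar t (w, s) m = (H t ^^ (M - m)) base" if "m \<le> M" for m
    using Psit_eq_funpow[OF t w s M(1) that] by (simp add: base_def)
  show "Psit \<phi> fbar t (w, s) n \<in> Dsk" using eq[of n] M(2) scoord_funpow_H[OF t \<open>base \<in> Dsk\<close>] by simp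
  have "M - n = Suc (M - Suc n)" using M(2) by simp
  then show "H t (Psit \<phi> fbar t (w, s) (Suc n)) = Psit \<phi> fbar t (w, s) n"
    using eq[of n] eq[of "Suc n"] M(2) by simp
qed

lemma Psit_at_height_index: "Psit \<phi> fbar t (w, s) (height_index s) = \<phi> (w, height_level s)"
  by (simp add: Psit_eq)

lemma scoord_Psit_below_height_index:
  assumes t: "t \<in> Jint" and w: "w \<in> Scirc" and s: "0 \<le> s" and n: "n < height_index s"
  shows "scoord (Psit \<phi> fbar t (w, s) n) = 1"
proof -
  define c where "c = height_level s"
  have c: "0 \<le> c" "c \<le> 1" "1/2 \<le> c" using height_index_level[OF s] n by (auto simp: c_def)
  have "(2::real) ^ 1 \<le> 2 ^ (height_index s - n)" using n by (intro power_increasing) auto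
  then have "2 * (1/2) \<le> 2 ^ (height_index s - n) * c" using c(3) by (intro mult_mono) auto
  then show ?thesis
    using Psit_eq[of t w s n] n scoord_funpow_H[OF t phi_in_Dsk[OF w c(1,2)]] scoord_phi[OF w c(1,2)]
    by (simp add: c_def)
qed

lemma Psit_notin_Ihat:
  assumes w: "w \<in> Scirc" and s: "0 \<le> s"
  shows "Psit \<phi> fbar t (w, s) \<notin> Ihat t"
proof
  assume "Psit \<phi> fbar t (w, s) \<in> Ihat t"
  then obtain x where "Psit \<phi> fbar t (w, s) = (\<lambda>n. complex_of_real (x n))" "\<forall>n. x n \<in> {-1..1}"
    unfolding Ihat_def by blast
  then have "Psit \<phi> fbar t (w, s) (height_index s) = complex_of_real (x (height_index s))"
    "x (height_index s) \<in> {-1..1}" by auto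
  moreover have "scoord (\<phi> (w, height_level s)) < 1"
    using height_index_level(1,2)[OF s] scoord_phi[OF w] by simp
  ultimately show False using scoord_real Psit_at_height_index by fastforce
qed

lemma Dhat_funpow: "z \<in> Dhat \<phi> fbar t \<Longrightarrow> (H t ^^ d) (z (n + d)) = z n"
proof (induction d)
  case (Suc d)
  have "(H t ^^ Suc d) (z (n + Suc d)) = (H t ^^ d) (H t (z (Suc (n + d))))"
    by (simp add: funpow_Suc_right del: funpow.simps)
  then show ?case using Suc by (simp add: Dhat_def)
qed simp

lemma Dhat_level_halves:
  assumes t: "t \<in> Jint" and z: "z \<in> Dhat \<phi> fbar t" and l: "scoord (z n) < 1"
  shows "scoord (z (Suc n)) = scoord (z n) / 2 \<and> ycoord (z (Suc n)) = ycoord (z n)"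
proof -
  have D: "z (Suc n) \<in> Dsk" and zn: "H t (z (Suc n)) = z n" using z by (simp_all add: Dhat_def)
  have "scoord (z n) = min 1 (2 * scoord (z (Suc n)))" using scoord_H[OF t D] zn by simp
  then have half: "scoord (z n) = 2 * scoord (z (Suc n))" using l by (auto simp: min_def split: if_splits)
  then have "z n = \<phi> (ycoord (z (Suc n)), scoord (z n))" using H_low[OF t D] zn l by simp
  then have "ycoord (z n) = ycoord (z (Suc n))"
    using ycoord_phi[OF coords_of_Dsk(1)[OF D]] coords_of_Dsk(2)[OF D] half l by simp
  then show ?thesis using half by simp
qed

lemma Dhat_levels_after:
  assumes t: "t \<in> Jint" and z: "z \<in> Dhat \<phi> fbar t" and l: "scoord (z n) < 1"
  shows "scoord (z (n + m)) = scoord (z n) / 2^m \<and> ycoord (z (n + m)) = ycoord (z n)"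
proof (induction m)
  case (Suc m)
  have "scoord (z n) / 2^m \<le> scoord (z n)"
    using coords_of_Dsk(2)[of "z n"] z divide_power_two_le by (simp add: Dhat_def)
  then have "scoord (z (n + m)) < 1" using Suc l by linarith
  then show ?case using Dhat_level_halves[OF t z, of "n + m"] Suc by simp
qed simp

lemma Dhat_exists_level_lt_1:
  assumes t: "t \<in> Jint" and z: "z \<in> Dhat \<phi> fbar t" "z \<notin> Ihat t"
  shows "\<exists>n. scoord (z n) < 1"
proof (rule ccontr)
  assume "\<nexists>n. scoord (z n) < 1"
  moreover have "scoord (z n) \<le> 1" for n using coords_of_Dsk(3)[of "z n"] z(1) by (simp add: Dhat_def)
  ultimately have "scoord (z n) = 1" for n by (meson not_less order_antisym)
  define x where "x n = Re (ycoord (z n)) / 2" for n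
  have zx: "z n = complex_of_real (x n)" "x n \<in> {-1..1}" for n
    using real_if_scoord_1 z(1) \<open>\<And>n. scoord (z n) = 1\<close> by (simp_all add: Dhat_def x_def)
  have "ft t (x (Suc n)) = x n" for n
  proof -
    have "complex_of_real (ft t (x (Suc n))) = H t (z (Suc n))"
      using fbar_on_Iseg[OF t zx(2)[of "Suc n"]] zx(1)[of "Suc n"] by (simp add: Ht_def)
    also have "\<dots> = complex_of_real (x n)" using z(1) zx(1)[of n] by (simp add: Dhat_def)
    finally show ?thesis by simp
  qed
  then have "z \<in> Ihat t" unfolding Ihat_def using zx by (auto intro!: exI[of _ x])
  then show False using z(2) by simp
qed

lemma Dhat_first_level_ge_half:
  assumes t: "t \<in> Jint" and z: "z \<in> Dhat \<phi> fbar t" and one: "\<forall>n<k. scoord (z n) = 1" and k: "0 < k"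
  shows "1/2 \<le> scoord (z k)"
proof -
  obtain m where m: "k = Suc m" using k gr0_implies_Suc by blast
  have "z (Suc m) \<in> Dsk" "H t (z (Suc m)) = z m" using z by (simp_all add: Dhat_def)
  then have "scoord (z m) = min 1 (2 * scoord (z k))" using scoord_H[OF t] m by metis
  then show ?thesis using one m by (simp add: min_def split: if_splits)
qed

subsection \<open>The inverse of \<open>\<Psi>\<close>\<close>

text \<open>On threads whose \<open>N\<close>-th coordinate has level below \<open>1/2\<close>, \<open>Psi_inv_at N\<close> inverts \<open>\<Psi>\<close>:
  for \<open>n \<ge> 1\<close> a coordinate of level \<open>1\<close> adds \<open>1\<close> to the height, the first one of level \<open>c < 1\<close>
  adds \<open>2c - 1\<close>, and the later ones add nothing.\<close>

definition Psi_inv_at :: "nat \<Rightarrow> (nat \<Rightarrow> complex \<times> real) \<Rightarrow> (complex \<times> real) \<times> real" where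
  "Psi_inv_at N y = ((ycoord (fst (y N)),
     scoord (fst (y 0)) + (\<Sum>n=1..N. clamp01 (2 * scoord (fst (y n)) - 1))), snd (y 0))"

definition Psi_inv :: "(nat \<Rightarrow> complex \<times> real) \<Rightarrow> (complex \<times> real) \<times> real" where
  "Psi_inv y = Psi_inv_at (LEAST N. scoord (fst (y N)) < 1/2) y"

lemma Psi_inv_at_iota:
  "Psi_inv_at N (iota t z) =
    ((ycoord (z N), scoord (z 0) + (\<Sum>n=1..N. clamp01 (2 * scoord (z n) - 1))), t)"
  by (simp add: Psi_inv_at_def iota_def)

lemma Psi_inv_eq_at:
  assumes t: "t \<in> Jint" and z: "z \<in> Dhat \<phi> fbar t" and N: "scoord (z N) < 1/2"
  shows "Psi_inv (iota t z) = Psi_inv_at N (iota t z)"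
proof -
  have stable: "Psi_inv_at (L + d) (iota t z) = Psi_inv_at L (iota t z)" if L: "scoord (z L) < 1/2" for L d
  proof (induction d)
    case (Suc d)
    have "scoord (z L) / 2^d \<le> scoord (z L)"
      using coords_of_Dsk(2)[of "z L"] z divide_power_two_le by (simp add: Dhat_def)
    moreover have "scoord (z (L + d)) = scoord (z L) / 2^d" "ycoord (z (L + d)) = ycoord (z L)"
      using Dhat_levels_after[OF t z, of L d] L by simp_all
    ultimately have "scoord (z (L + d)) < 1/2" "ycoord (z (L + d)) = ycoord (z L)"
      using L by linarith+
    then have "clamp01 (2 * scoord (z (Suc (L + d))) - 1) = 0" "ycoord (z (Suc (L + d))) = ycoord (z L)"
      using Dhat_level_halves[OF t z, of "L + d"] by (auto simp: clamp01_def)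
    then show ?case using Suc by (simp add: Psi_inv_at_iota)
  qed simp
  define L where "L = (LEAST N. scoord (z N) < 1/2)"
  have "scoord (z L) < 1/2" "L \<le> N" using N unfolding L_def by (auto intro: LeastI Least_le)
  then have "Psi_inv_at N (iota t z) = Psi_inv_at L (iota t z)" using stable[of L "N - L"] by simp
  then show ?thesis by (simp add: Psi_inv_def L_def iota_def)
qed

lemma Psi_inv_iota:
  assumes t: "t \<in> Jint" and z: "z \<in> Dhat \<phi> fbar t"
    and one: "\<forall>n<k. scoord (z n) = 1" and lt: "scoord (z k) < 1"
  shows "Psi_inv (iota t z) = ((ycoord (z k), height_of k (scoord (z k))), t)"
proof -
  have succ: "scoord (z (Suc k)) = scoord (z k) / 2" "ycoord (z (Suc k)) = ycoord (z k)"
    using Dhat_level_halves[OF t z lt] by auto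
  have "0 \<le> scoord (z k)" using coords_of_Dsk(2) z by (simp add: Dhat_def)
  have height: "scoord (z 0) + (\<Sum>n=1..Suc k. clamp01 (2 * scoord (z n) - 1)) = height_of k (scoord (z k))"
    by (rule clamp01_sum_staircase[where a = "\<lambda>n. scoord (z n)"])
      (use one lt succ \<open>0 \<le> scoord (z k)\<close> Dhat_first_level_ge_half[OF t z one] in auto)
  have "Psi_inv (iota t z) = Psi_inv_at (Suc k) (iota t z)" using Psi_inv_eq_at[OF t z] succ lt by simp
  also have "\<dots> = ((ycoord (z k), height_of k (scoord (z k))), t)"
    unfolding Psi_inv_at_iota height succ(2) ..
  finally show ?thesis .
qed

lemma Psit_eq_Dhat_thread:
  assumes t: "t \<in> Jint" and z: "z \<in> Dhat \<phi> fbar t"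
    and one: "\<forall>n<k. scoord (z n) = 1" and lt: "scoord (z k) < 1"
  shows "Psit \<phi> fbar t (ycoord (z k), height_of k (scoord (z k))) = z"
proof -
  define w where "w = ycoord (z k)"
  define c where "c = scoord (z k)"
  have "0 \<le> c" "c < 1" "0 < k \<Longrightarrow> 1/2 \<le> c"
    using coords_of_Dsk(2)[of "z k"] z lt Dhat_first_level_ge_half[OF t z one] by (auto simp: c_def Dhat_def)
  note hk = height_of_index_level[OF this]
  have after: "z (k + m) = \<phi> (w, c / 2^m)" for m
    using Dhat_levels_after[OF t z lt, of m] coords_of_Dsk(4)[of "z (k + m)"] z by (simp add: Dhat_def w_def c_def)
  have "Psit \<phi> fbar t (w, height_of k c) n = z n" for n
  proof (cases "n \<le> k")
    case True
    have "(H t ^^ (k - n)) (z (n + (k - n))) = z n" by (rule Dhat_funpow[OF z])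
    then show ?thesis using True after[of 0] by (simp add: Psit_eq hk)
  next
    case False
    then show ?thesis using after[of "n - k"] by (simp add: Psit_eq hk)
  qed
  then show ?thesis by (auto simp: w_def c_def)
qed

lemma Psi_apply: "Psi \<phi> fbar ((w, s), t) = iota t (Psit \<phi> fbar t (w, s))"
  by (simp add: Psi_def)

lemma Psit_in_Dhat_diff_Ihat: "t \<in> Jint \<Longrightarrow> p \<in> Acyl \<Longrightarrow> Psit \<phi> fbar t p \<in> Dhat \<phi> fbar t - Ihat t"
  using Psit_in_Dhat Psit_notin_Ihat by (cases p) (auto simp: Acyl_def)

lemma Psi_in_PihatC:
  assumes "p \<in> Acyl \<times> Jint"
  shows "Psi \<phi> fbar p \<in> PihatC \<phi> fbar"
proof -
  obtain a t where "p = (a, t)" "a \<in> Acyl" "t \<in> Jint" using assms by auto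
  then have "Psi \<phi> fbar p = iota t (Psit \<phi> fbar t a)" by (simp add: Psi_def)
  moreover have "Psit \<phi> fbar t a \<in> Dhat \<phi> fbar t - Ihat t"
    using Psit_in_Dhat_diff_Ihat \<open>a \<in> Acyl\<close> \<open>t \<in> Jint\<close> by blast
  ultimately show ?thesis using \<open>t \<in> Jint\<close> unfolding PihatC_iff by blast
qed

lemma Psi_inv_Psi:
  assumes "p \<in> Acyl \<times> Jint"
  shows "Psi_inv (Psi \<phi> fbar p) = p"
proof -
  obtain w s t where p: "p = ((w, s), t)" "w \<in> Scirc" "0 \<le> s" "t \<in> Jint"
    using assms by (auto simp: Acyl_def)
  note lev = height_index_level[OF p(3)]
  have "scoord (\<phi> (w, height_level s)) = height_level s" "ycoord (\<phi> (w, height_level s)) = w"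
    using scoord_phi[OF p(2)] ycoord_phi[OF p(2)] lev(1,2) by simp_all
  then show ?thesis
    using Psi_inv_iota[OF p(4) Psit_in_Dhat[OF p(4,2,3)], of "height_index s"]
      scoord_Psit_below_height_index[OF p(4,2,3)] lev(2,5) by (simp add: p(1) Psi_apply Psit_at_height_index)
qed

lemma Psi_Psi_inv:
  assumes "y \<in> PihatC \<phi> fbar"
  shows "Psi_inv y \<in> Acyl \<times> Jint" "Psi \<phi> fbar (Psi_inv y) = y"
proof -
  obtain t z where tz: "t \<in> Jint" "z \<in> Dhat \<phi> fbar t" "z \<notin> Ihat t" "y = iota t z"
    using assms by (auto simp: PihatC_iff)
  define k where "k = (LEAST n. scoord (z n) < 1)"
  have lt: "scoord (z k) < 1"
    using Dhat_exists_level_lt_1[OF tz(1-3)] unfolding k_def by (rule LeastI_ex)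
  have one: "\<forall>n<k. scoord (z n) = 1"
  proof (intro allI impI)
    fix n assume "n < k"
    then have "\<not> scoord (z n) < 1" unfolding k_def by (rule not_less_Least)
    moreover have "scoord (z n) \<le> 1" using coords_of_Dsk(3) tz(2) by (simp add: Dhat_def)
    ultimately show "scoord (z n) = 1" by simp
  qed
  have "0 \<le> scoord (z k)" "ycoord (z k) \<in> Scirc" using coords_of_Dsk(1,2) tz(2) by (simp_all add: Dhat_def)
  then show "Psi_inv y \<in> Acyl \<times> Jint"
    using Psi_inv_iota[OF tz(1,2) one lt] tz(1,4) by (auto simp: Acyl_def height_of_def)
  show "Psi \<phi> fbar (Psi_inv y) = y"
    using Psi_inv_iota[OF tz(1,2) one lt] Psit_eq_Dhat_thread[OF tz(1,2) one lt] tz(4)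
    by (simp add: Psi_apply)
qed

subsection \<open>Continuity\<close>

definition HPi :: "complex \<times> real \<Rightarrow> complex \<times> real" where
  "HPi p = (H (snd p) (fst p), snd p)"

lemma HPi_funpow: "(HPi ^^ j) (z, t) = ((H t ^^ j) z, t)"
  by (induction j) (simp_all add: HPi_def)

lemma HPi_continuous: "continuous_on (Dsk \<times> Jint) HPi"
  and HPi_image: "HPi ` (Dsk \<times> Jint) \<subseteq> Dsk \<times> Jint"
proof -
  have "(\<lambda>p. fbar (snd p) (fst p)) ` (Dsk \<times> Jint) \<subseteq> Dsk" using fbar_in_Dsk by auto
  then have "continuous_on (Dsk \<times> Jint) (\<lambda>p. Upsilon \<phi> (fbar (snd p) (fst p)))"
    using continuous_on_compose2[OF Upsilon_continuous fbar_continuous_joint] by blast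
  then show "continuous_on (Dsk \<times> Jint) HPi" unfolding HPi_def Ht_def by (intro continuous_intros) simp
  show "HPi ` (Dsk \<times> Jint) \<subseteq> Dsk \<times> Jint" using H_in_Dsk by (auto simp: HPi_def)
qed

lemma Psit_coordinate_continuous: "continuous_on (Acyl \<times> Jint) (\<lambda>p. Psit \<phi> fbar (snd p) (fst p) n)"
proof (rule continuous_on_open_cover)
  fix p0 assume p0: "p0 \<in> Acyl \<times> Jint"
  obtain M where M: "snd (fst p0) < real M" "n < M" using exists_nat_gt by blast
  define U where "U = (Acyl \<times> Jint) \<inter> {p. snd (fst p) < real M}"
  have U: "fst (fst p) \<in> Scirc" "0 \<le> snd (fst p)" "snd (fst p) < real M" "snd p \<in> Jint" if "p \<in> U" for p
    using that by (auto simp: U_def Acyl_def)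
  define base where "base p = (\<phi> (fst (fst p), height_unroll (snd (fst p)) / 2^M), snd p)"
    for p :: "(complex \<times> real) \<times> real"
  have "continuous_on U (\<lambda>p. height_unroll (snd (fst p)))"
    by (rule continuous_on_compose2[OF height_unroll_continuous]) (use U in \<open>auto intro!: continuous_intros\<close>)
  then have "continuous_on U (\<lambda>p. \<phi> (fst (fst p), height_unroll (snd (fst p)) / 2^M))"
    by (intro continuous_on_compose2[OF phi_continuous] continuous_intros)
      (use U height_unroll_div_bounds in auto)
  then have "continuous_on U base" unfolding base_def by (intro continuous_intros)
  moreover have "base ` U \<subseteq> Dsk \<times> Jint"
    using U phi_in_Dsk height_unroll_div_bounds by (auto simp: base_def)
  ultimately have "continuous_on U (\<lambda>p. fst ((HPi ^^ (M - n)) (base p)))"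
    by (intro continuous_intros continuous_on_compose2[OF continuous_on_funpow[OF HPi_continuous HPi_image]])
  moreover have "fst ((HPi ^^ (M - n)) (base p)) = Psit \<phi> fbar (snd p) (fst p) n" if "p \<in> U" for p
  proof -
    obtain w s t where "p = ((w, s), t)" by (metis prod.collapse)
    then show ?thesis
      using Psit_eq_funpow[of t w s M n] U[OF that] M(2) by (simp add: base_def HPi_funpow)
  qed
  ultimately have "continuous_on U (\<lambda>p. Psit \<phi> fbar (snd p) (fst p) n)"
    by (rule continuous_on_eq)
  moreover have "openin (top_of_set (Acyl \<times> Jint)) U"
    unfolding U_def by (intro openin_open_Int open_Collect_less continuous_intros)
  moreover have "p0 \<in> U" using p0 M(1) by (simp add: U_def)
  ultimately show "\<exists>U. openin (top_of_set (Acyl \<times> Jint)) U \<and> p0 \<in> U \<and>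
      continuous_on U (\<lambda>p. Psit \<phi> fbar (snd p) (fst p) n)" by blast
qed

lemma Psi_continuous: "continuous_on (Acyl \<times> Jint) (Psi \<phi> fbar)"
proof (rule continuous_on_coordinatewise_then_product)
  fix n
  have "continuous_on (Acyl \<times> Jint) (\<lambda>p. (Psit \<phi> fbar (snd p) (fst p) n, snd p))"
    by (intro continuous_intros Psit_coordinate_continuous)
  then show "continuous_on (Acyl \<times> Jint) (\<lambda>p. Psi \<phi> fbar p n)"
    by (simp add: Psi_def iota_def case_prod_beta)
qed

lemma Psit_continuous:
  assumes t: "t \<in> Jint"
  shows "continuous_on Acyl (Psit \<phi> fbar t)"
proof (rule continuous_on_coordinatewise_then_product)
  fix n
  have "continuous_on Acyl (\<lambda>a. (a, t))" "(\<lambda>a. (a, t)) ` Acyl \<subseteq> Acyl \<times> Jint"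
    using t by (auto intro: continuous_intros)
  then show "continuous_on Acyl (\<lambda>a. Psit \<phi> fbar t a n)"
    using continuous_on_compose2[OF Psit_coordinate_continuous] by fastforce
qed

lemma PihatC_coordinate: "y \<in> PihatC \<phi> fbar \<Longrightarrow> fst (y n) \<in> Dsk"
  by (auto simp: PihatC_iff iota_def Dhat_def)

lemma PihatC_exists_level_lt_half:
  assumes "y \<in> PihatC \<phi> fbar"
  shows "\<exists>N. scoord (fst (y N)) < 1/2"
proof -
  obtain t z where tz: "t \<in> Jint" "z \<in> Dhat \<phi> fbar t" "z \<notin> Ihat t" "y = iota t z"
    using assms by (auto simp: PihatC_iff)
  then obtain n where "scoord (z n) < 1" using Dhat_exists_level_lt_1 by blast
  then have "scoord (z (Suc n)) < 1/2" using Dhat_level_halves[OF tz(1,2)] by simp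
  then show ?thesis using tz(4) by (auto simp: iota_def)
qed

lemma Psi_inv_continuous: "continuous_on (PihatC \<phi> fbar) Psi_inv"
proof (rule continuous_on_open_cover)
  fix y0 assume y0: "y0 \<in> PihatC \<phi> fbar"
  obtain N where N: "scoord (fst (y0 N)) < 1/2" using PihatC_exists_level_lt_half[OF y0] by blast
  have scoord_cont: "continuous_on (PihatC \<phi> fbar) (\<lambda>y. scoord (fst (y n)))" for n
    by (rule continuous_on_compose2[OF scoord_continuous continuous_on_fst_coordinate])
      (auto simp: PihatC_coordinate)
  define U where "U = PihatC \<phi> fbar \<inter> (\<lambda>y. scoord (fst (y N))) -` {..<1/2}"
  have "U \<subseteq> PihatC \<phi> fbar" by (simp add: U_def)
  have "continuous_on U (\<lambda>y. ycoord (fst (y N)))"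
    by (rule continuous_on_compose2[OF ycoord_continuous continuous_on_fst_coordinate])
      (auto simp: U_def PihatC_coordinate)
  then have "continuous_on U (Psi_inv_at N)"
    unfolding Psi_inv_at_def clamp01_def
    by (intro continuous_intros continuous_on_subset[OF scoord_cont \<open>U \<subseteq> PihatC \<phi> fbar\<close>]
        continuous_on_subset[OF continuous_on_product_coordinates]) auto
  moreover have "Psi_inv_at N y = Psi_inv y" if y: "y \<in> U" for y
  proof -
    obtain t z where "t \<in> Jint" "z \<in> Dhat \<phi> fbar t" "y = iota t z"
      using y PihatC_iff[of y] unfolding U_def by blast
    then show ?thesis using Psi_inv_eq_at y by (auto simp: U_def iota_def)
  qed
  ultimately have "continuous_on U Psi_inv" by (rule continuous_on_eq)
  moreover have "openin (top_of_set (PihatC \<phi> fbar)) U"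
    unfolding U_def by (rule continuous_openin_preimage_gen[OF scoord_cont]) simp
  ultimately show "\<exists>U. openin (top_of_set (PihatC \<phi> fbar)) U \<and> y0 \<in> U \<and> continuous_on U Psi_inv"
    using y0 N by (auto simp: U_def)
qed

lemma Psi_homeomorphism: "homeomorphism (Acyl \<times> Jint) (PihatC \<phi> fbar) (Psi \<phi> fbar) Psi_inv"
proof (rule homeomorphismI)
  show "Psi \<phi> fbar ` (Acyl \<times> Jint) \<subseteq> PihatC \<phi> fbar" using Psi_in_PihatC by blast
  show "Psi_inv ` PihatC \<phi> fbar \<subseteq> Acyl \<times> Jint" using Psi_Psi_inv(1) by blast
qed (simp_all add: Psi_continuous Psi_inv_continuous Psi_inv_Psi Psi_Psi_inv(2))

lemma Psi_slice:
  assumes t: "t \<in> Jint"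
  shows "Psi \<phi> fbar ` (Acyl \<times> {t}) = iota t ` (Dhat \<phi> fbar t - Ihat t)"
proof
  show "Psi \<phi> fbar ` (Acyl \<times> {t}) \<subseteq> iota t ` (Dhat \<phi> fbar t - Ihat t)"
    using Psit_in_Dhat_diff_Ihat[OF t] by (auto simp: Psi_def)
  show "iota t ` (Dhat \<phi> fbar t - Ihat t) \<subseteq> Psi \<phi> fbar ` (Acyl \<times> {t})"
  proof
    fix y assume "y \<in> iota t ` (Dhat \<phi> fbar t - Ihat t)"
    then have y: "y \<in> PihatC \<phi> fbar" "snd (y 0) = t"
      using t by (auto simp: PihatC_iff iota_def)
    then have "Psi_inv y \<in> Acyl \<times> {t}" using Psi_Psi_inv(1) by (auto simp: Psi_inv_def Psi_inv_at_def)
    then show "y \<in> Psi \<phi> fbar ` (Acyl \<times> {t})" using Psi_Psi_inv(2)[OF y(1)] by force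
  qed
qed

lemma Psit_homeomorphism:
  assumes t: "t \<in> Jint"
  shows "homeomorphism Acyl (Dhat \<phi> fbar t - Ihat t) (Psit \<phi> fbar t) (\<lambda>z. fst (Psi_inv (iota t z)))"
proof (rule homeomorphism_slice[OF Psi_homeomorphism t Psit_continuous[OF t]])
  show "continuous_on (Dhat \<phi> fbar t - Ihat t) (iota t)"
    unfolding iota_def
    by (intro continuous_on_coordinatewise_then_product continuous_intros
        continuous_on_subset[OF continuous_on_product_coordinates]) simp
  show "inj (iota t)" by (simp add: inj_def iota_eq_iff)
  show "iota t (Psit \<phi> fbar t a) = Psi \<phi> fbar (a, t)" for a by (simp add: Psi_def)
  show "iota t ` (Dhat \<phi> fbar t - Ihat t) = Psi \<phi> fbar ` (Acyl \<times> {t})" using Psi_slice[OF t] ..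
qed

end

theorem mainTheorem7:
  fixes \<phi> :: "complex \<times> real \<Rightarrow> complex" and fbar :: "real \<Rightarrow> complex \<Rightarrow> complex"
  assumes "mapping_cyl_coords \<phi>"
    and "unwrapping \<phi> fbar"
    and "\<forall>t\<in>Jint. \<forall>w\<in>Scirc. \<forall>s\<in>{0..3/4}. fbar t (\<phi> (w, s)) = \<phi> (w, s)"
  shows "(\<exists>g. homeomorphism (Acyl \<times> Jint) (PihatC \<phi> fbar) (Psi \<phi> fbar) g)
       \<and> (\<forall>t\<in>Jint. Psi \<phi> fbar ` (Acyl \<times> {t}) \<subseteq> iota t ` Dhat \<phi> fbar t)
       \<and> (\<forall>t\<in>Jint. \<exists>g. homeomorphism Acyl (Dhat \<phi> fbar t - Ihat t) (Psit \<phi> fbar t) g)"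
proof -
  interpret unwrapping_context \<phi> fbar using assms by unfold_locales
  have "Psi \<phi> fbar ` (Acyl \<times> {t}) \<subseteq> iota t ` Dhat \<phi> fbar t" if "t \<in> Jint" for t
    using Psi_slice[OF that] by blast
  then show ?thesis using Psi_homeomorphism Psit_homeomorphism by blast
qed

end
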